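(* In the boundary-driven switching system, for every $x\in V=\{1,\dots,N\}$, $$\theta_0(x)=\sum_{\beta\in\{L,R\}}\sum_{j\in\{0,1\}}\hat p\big((x,0),(\beta,j)\big)\,\rho_{\beta,j},\qquad \theta_1(x)=\sum_{\beta\in\{L,R\}}\sum_{j\in\{0,1\}}\hat p\big((x,1),(\beta,j)\big)\,\rho_{\beta,j}.$$
   Context: Boundary-driven switching system: fix $\sigma\in\{-1,0,1\}$, $N\in\mathbb N$, $V=\{1,\dots,N\}$, $\epsilon\in[0,1]$, $\gamma>0$, and reservoir parameters $\rho_{L,0},\rho_{L,1},\rho_{R,0},\rho_{R,1}\ge0$ (in $[0,1]$ if $\sigma=-1$). Configurations are $\eta=(\eta_0(x),\eta_1(x))_{x\in V}$ with values in $\{0,1\}$ if $\sigma=-1$ and in $\mathbb N_0$ if $\sigma\in\{0,1\}$. Writing $\delta_{(x,i)}$ for one particle at site $x$ in layer $i$, the continuous-time Markov chain has transitions: for $x\in\{1,\dots,N-1\}$, $i\in\{0,1\}$, $\eta\to\eta-\delta_{(x,i)}+\delta_{(x+1,i)}$ at rate $\epsilon^i\eta_i(x)(1+\sigma\eta_i(x+1))$ and $\eta\to\eta-\delta_{(x+1,i)}+\delta_{(x,i)}$ at rate $\epsilon^i\eta_i(x+1)(1+\sigma\eta_i(x))$ ($\epsilon^0=1$); for $x\in V$, $\eta\to\eta-\delta_{(x,i)}+\delta_{(x,1-i)}$ at rate $\gamma\eta_i(x)(1+\sigma\eta_{1-i}(x))$; and for $i\in\{0,1\}$, $\eta\to\eta-\delta_{(1,i)}$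 at rate $\eta_i(1)(1+\sigma\rho_{L,i})$, $\eta\to\eta+\delta_{(1,i)}$ at rate $\rho_{L,i}(1+\sigma\eta_i(1))$, $\eta\to\eta-\delta_{(N,i)}$ at rate $\eta_i(N)(1+\sigma\rho_{R,i})$, $\eta\to\eta+\delta_{(N,i)}$ at rate $\rho_{R,i}(1+\sigma\eta_i(N))$. This chain has a unique stationary distribution $\mu_{stat}$, and $\theta_i(x):=\mathbb E_{\mu_{stat}}[\eta_i(x)]$ is the stationary microscopic profile. Absorption probabilities: consider the continuous-time Markov chain on $(V\times\{0,1\})\cup\{(L,0),(L,1),(R,0),(R,1)\}$ (the one-particle dual) in which the last four states are absorbing, and from $(x,0)$ it jumps to $(x\pm1,0)$ at rate $1$ each (whenever $x\pm1\in V$), from $(x,1)$ to $(x\pm1,1)$ at rate $\epsilon$ each (whenever $x\pm1\in V$), from $(x,i)$ to $(x,1-i)$ at rate $\gamma$, from $(1,i)$ to $(L,i)$ at rate $1$, and from $(N,i)$ to $(R,i)$ at rate $1$. $\hat p((x,i),(\beta,j))$ denotes the probability that this chain started at $(x,i)$ is eventually absorbed at $(\beta,j)$. *)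

theory Defs
  imports "HOL-Probability.Probability_Mass_Function"
begin

datatype side = L | R

text \<open>States of the one-particle dual: In x i is site x in layer i (x in 1..N, i in {0,1});
  Abs b j is the absorbing reservoir state (b,j).\<close>
datatype dstate = In nat nat | Abs side nat

fun drate :: "nat \<Rightarrow> real \<Rightarrow> real \<Rightarrow> dstate \<Rightarrow> dstate \<Rightarrow> real" where
  "drate N eps gam (In x i) t =
     (if t = In (x + 1) i \<and> x + 1 \<le> N then eps ^ i else 0)
   + (if t = In (x - 1) i \<and> 2 \<le> x then eps ^ i else 0)
   + (if t = In x (1 - i) then gam else 0)
   + (if t = Abs L i \<and> x = 1 then 1 else 0)
   + (if t = Abs R i \<and> x = N then 1 else 0)"
| "drate N eps gam (Abs b j) t = 0"

definition dtargets :: "nat \<Rightarrow> nat \<Rightarrow> dstate set" where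
  "dtargets x i = {In (x + 1) i, In (x - 1) i, In x (1 - i), Abs L i, Abs R i}"

definition dtot :: "nat \<Rightarrow> real \<Rightarrow> real \<Rightarrow> dstate \<Rightarrow> real" where
  "dtot N eps gam s = (case s of In x i \<Rightarrow> (\<Sum>t\<in>dtargets x i. drate N eps gam s t) | Abs b j \<Rightarrow> 0)"

text \<open>Probability that the dual chain started at s has been absorbed at tgt after at most n jumps
  (computed through its embedded jump chain).\<close>
fun habs :: "nat \<Rightarrow> real \<Rightarrow> real \<Rightarrow> nat \<Rightarrow> dstate \<Rightarrow> dstate \<Rightarrow> real" where
  "habs N eps gam 0 s tgt = (if s = tgt then 1 else 0)"
| "habs N eps gam (Suc n) (Abs b j) tgt = (if Abs b j = tgt then 1 else 0)"
| "habs N eps gam (Suc n) (In x i) tgt =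
     (\<Sum>t\<in>dtargets x i. drate N eps gam (In x i) t / dtot N eps gam (In x i) * habs N eps gam n t tgt)"

definition phat :: "nat \<Rightarrow> real \<Rightarrow> real \<Rightarrow> dstate \<Rightarrow> dstate \<Rightarrow> real" where
  "phat N eps gam s tgt = (SUP n. habs N eps gam n s tgt)"

text \<open>A configuration assigns to (x,i) the number of particles at site x in layer i.\<close>
type_synonym config = "nat \<times> nat \<Rightarrow> nat"

definition addp :: "nat \<times> nat \<Rightarrow> config \<Rightarrow> config" where
  "addp p \<eta> = \<eta>(p := \<eta> p + 1)"

definition remp :: "nat \<times> nat \<Rightarrow> config \<Rightarrow> config" where
  "remp p \<eta> = \<eta>(p := \<eta> p - 1)"

definition movep :: "nat \<times> nat \<Rightarrow> nat \<times> nat \<Rightarrow> config \<Rightarrow> config" where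
  "movep p q \<eta> = addp q (remp p \<eta>)"

definition statespace :: "int \<Rightarrow> nat \<Rightarrow> config set" where
  "statespace \<sigma> N = {\<eta>. (\<forall>x i. (x \<notin> {1..N} \<or> i \<notin> {0,1}) \<longrightarrow> \<eta> (x, i) = 0)
                         \<and> (\<sigma> = -1 \<longrightarrow> (\<forall>p. \<eta> p \<le> 1))}"

definition transitions ::
  "int \<Rightarrow> nat \<Rightarrow> real \<Rightarrow> real \<Rightarrow> (side \<Rightarrow> nat \<Rightarrow> real) \<Rightarrow> config \<Rightarrow> (real \<times> config) list" where
  "transitions \<sigma> N eps gam \<rho> \<eta> =
     concat (map (\<lambda>x. concat (map (\<lambda>i.
        [ (eps ^ i * real (\<eta> (x, i)) * (1 + of_int \<sigma> * real (\<eta> (x + 1, i))), movep (x, i) (x + 1, i) \<eta>),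
          (eps ^ i * real (\<eta> (x + 1, i)) * (1 + of_int \<sigma> * real (\<eta> (x, i))), movep (x + 1, i) (x, i) \<eta>) ])
        [0, 1])) [1..<N])
   @ concat (map (\<lambda>x. map (\<lambda>i.
        (gam * real (\<eta> (x, i)) * (1 + of_int \<sigma> * real (\<eta> (x, 1 - i))), movep (x, i) (x, 1 - i) \<eta>))
        [0, 1]) [1..<N + 1])
   @ concat (map (\<lambda>i.
        [ (real (\<eta> (1, i)) * (1 + of_int \<sigma> * \<rho> L i), remp (1, i) \<eta>),
          (\<rho> L i * (1 + of_int \<sigma> * real (\<eta> (1, i))), addp (1, i) \<eta>),
          (real (\<eta> (N, i)) * (1 + of_int \<sigma> * \<rho> R i), remp (N, i) \<eta>),
          (\<rho> R i * (1 + of_int \<sigma> * real (\<eta> (N, i))), addp (N, i) \<eta>) ])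
        [0, 1])"

definition qrate :: "int \<Rightarrow> nat \<Rightarrow> real \<Rightarrow> real \<Rightarrow> (side \<Rightarrow> nat \<Rightarrow> real) \<Rightarrow> config \<Rightarrow> config \<Rightarrow> real" where
  "qrate \<sigma> N eps gam \<rho> \<eta> \<zeta> =
     (if \<zeta> = \<eta> then 0 else sum_list (map fst (filter (\<lambda>rt. snd rt = \<zeta>) (transitions \<sigma> N eps gam \<rho> \<eta>))))"

definition exitrate :: "int \<Rightarrow> nat \<Rightarrow> real \<Rightarrow> real \<Rightarrow> (side \<Rightarrow> nat \<Rightarrow> real) \<Rightarrow> config \<Rightarrow> real" where
  "exitrate \<sigma> N eps gam \<rho> \<eta> =
     sum_list (map fst (filter (\<lambda>rt. snd rt \<noteq> \<eta>) (transitions \<sigma> N eps gam \<rho> \<eta>)))"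

text \<open>Stationary distribution: a probability distribution on the state space satisfying
  global balance (total inflow = total outflow at every state).\<close>
definition stationary ::
  "int \<Rightarrow> nat \<Rightarrow> real \<Rightarrow> real \<Rightarrow> (side \<Rightarrow> nat \<Rightarrow> real) \<Rightarrow> config pmf \<Rightarrow> bool" where
  "stationary \<sigma> N eps gam \<rho> \<mu> \<longleftrightarrow>
     set_pmf \<mu> \<subseteq> statespace \<sigma> N \<and>
     (\<forall>\<zeta>\<in>statespace \<sigma> N.
        (\<integral>\<^sup>+ \<eta>. ennreal (qrate \<sigma> N eps gam \<rho> \<eta> \<zeta>) \<partial>measure_pmf \<mu>)
          = ennreal (pmf \<mu> \<zeta> * exitrate \<sigma> N eps gam \<rho> \<zeta>))"

end

theory Submission
  imports Defs
begin

(* Both sides solve the same discrete Dirichlet problem on V x {0,1}. By first-step analysis,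
   the absorption mean h(x,i) = sum of phat((x,i),(beta,j)) * rho(beta,j) satisfies A h + inflow = 0,
   where A is the generator of the dual chain killed at the reservoirs and inflow(x,i) collects
   the reservoir densities adjacent to x; a maximum principle makes this solution unique.

   On the particle side, the generator L maps a linear observable f_v(eta) = sum v(x,i) eta_i(x)
   to the affine function sum eta_i(x) (A v)(x,i) + sum v * inflow, and A is self-adjoint, so
   formally E[L f_v] = sum v * (A theta + inflow). Stationarity only gives E[L f] = 0 for f of
   finite support, so f_v is truncated at level M: a Lyapunov function with A lyap <= -1 bounds
   the first moments, concavity of min(f_v, M) yields E[L f_v] >= 0 for positive v, and for v = 1,
   where only reservoir moves matter, dominated convergence yields E[L f_1] = 0. Hence
   A theta + inflow is nonnegative with vanishing sum, thus zero, and theta = h. *)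

section \<open>Absorption probabilities of the dual chain\<close>

lemma drate_nonneg: "0 \<le> eps \<Longrightarrow> 0 \<le> gam \<Longrightarrow> 0 \<le> drate N eps gam s t"
  by (cases s) auto

declare drate.simps [simp del]

lemma drate_In:
  assumes "i \<in> {0, 1}"
  shows "drate N eps gam (In x i) (In (x + 1) i) = (if x < N then eps ^ i else 0)"
    and "drate N eps gam (In x i) (In (x - 1) i) = (if 2 \<le> x then eps ^ i else 0)"
    and "drate N eps gam (In x i) (In x (1 - i)) = gam"
    and "drate N eps gam (In x i) (Abs L i) = (if x = 1 then 1 else 0)"
    and "drate N eps gam (In x i) (Abs R i) = (if x = N then 1 else 0)"
  using assms by (auto simp: drate.simps)

lemma sum_dtargets:
  assumes "i \<in> {0, 1}"
  shows "(\<Sum>t\<in>dtargets x i. f t)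
    = f (In (x + 1) i) + f (In (x - 1) i) + f (In x (1 - i)) + f (Abs L i) + f (Abs R i)"
  using assms by (auto simp: dtargets_def add.assoc)

lemma dtot_In: "dtot N eps gam (In x i) = (\<Sum>t\<in>dtargets x i. drate N eps gam (In x i) t)"
  by (simp add: dtot_def)

lemma dtot_pos:
  assumes "0 \<le> eps" "0 < gam"
  shows "0 < dtot N eps gam (In x i)"
proof -
  have "gam \<le> drate N eps gam (In x i) (In x (1 - i))"
    using assms by (auto simp: drate.simps)
  also have "\<dots> \<le> dtot N eps gam (In x i)"
    unfolding dtot_In using assms
    by (intro member_le_sum) (auto simp: dtargets_def drate_nonneg)
  finally show ?thesis using assms(2) by linarith
qed

lemma habs_bounds:
  assumes "0 \<le> eps" "0 < gam"
  shows "0 \<le> habs N eps gam n s tgt \<and> habs N eps gam n s tgt \<le> 1"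
proof (induction n arbitrary: s)
  case 0
  then show ?case by simp
next
  case (Suc n)
  show ?case
  proof (cases s)
    case (In x i)
    let ?p = "\<lambda>t. drate N eps gam (In x i) t / dtot N eps gam (In x i)"
    have p_nonneg: "0 \<le> ?p t" for t
      using dtot_pos[OF assms] drate_nonneg assms by (simp add: less_imp_le)
    have "(\<Sum>t\<in>dtargets x i. ?p t * habs N eps gam n t tgt) \<le> (\<Sum>t\<in>dtargets x i. ?p t)"
      by (intro sum_mono mult_left_le p_nonneg conjunct2[OF Suc.IH])
    also have "\<dots> = 1"
      using dtot_pos[OF assms, of N x i] by (simp add: sum_divide_distrib[symmetric] dtot_In)
    finally show ?thesis
      using In Suc.IH p_nonneg by (auto intro!: sum_nonneg simp del: times_divide_eq_left)
  qed simp
qed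

lemma habs_le_habs_Suc:
  assumes "0 \<le> eps" "0 < gam"
  shows "habs N eps gam n s (Abs b j) \<le> habs N eps gam (Suc n) s (Abs b j)"
proof (induction n arbitrary: s)
  case 0
  show ?case
    using habs_bounds[OF assms, where n = 1 and s = s] by (cases s) (auto simp del: habs.simps(3))
next
  case (Suc n)
  show ?case
  proof (cases s)
    case (In x i)
    have "0 \<le> drate N eps gam (In x i) t / dtot N eps gam (In x i)" for t
      using dtot_pos[OF assms] drate_nonneg assms by (simp add: less_imp_le)
    then show ?thesis
      unfolding In habs.simps by (intro sum_mono mult_left_mono Suc.IH)
  qed simp
qed

lemma habs_tendsto_phat:
  assumes "0 \<le> eps" "0 < gam"
  shows "(\<lambda>n. habs N eps gam n s (Abs b j)) \<longlonglongrightarrow> phat N eps gam s (Abs b j)"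
  unfolding phat_def
proof (rule LIMSEQ_incseq_SUP)
  show "incseq (\<lambda>n. habs N eps gam n s (Abs b j))"
    by (intro incseq_SucI habs_le_habs_Suc[OF assms])
  show "bdd_above (range (\<lambda>n. habs N eps gam n s (Abs b j)))"
    using habs_bounds[OF assms] by (intro bdd_aboveI[where M = 1]) auto
qed

lemma phat_Abs: "phat N eps gam (Abs b j) tgt = (if Abs b j = tgt then 1 else 0)"
proof -
  have "habs N eps gam n (Abs b j) tgt = (if Abs b j = tgt then 1 else 0)" for n
    by (cases n) auto
  then show ?thesis unfolding phat_def by simp
qed

lemma phat_In:
  assumes "0 \<le> eps" "0 < gam"
  shows "phat N eps gam (In x i) (Abs b j) = (\<Sum>t\<in>dtargets x i.
    drate N eps gam (In x i) t / dtot N eps gam (In x i) * phat N eps gam t (Abs b j))"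
proof (rule LIMSEQ_unique)
  show "(\<lambda>n. habs N eps gam (Suc n) (In x i) (Abs b j)) \<longlonglongrightarrow> phat N eps gam (In x i) (Abs b j)"
    using habs_tendsto_phat[OF assms] by (rule LIMSEQ_Suc)
  show "(\<lambda>n. habs N eps gam (Suc n) (In x i) (Abs b j)) \<longlonglongrightarrow> (\<Sum>t\<in>dtargets x i.
      drate N eps gam (In x i) t / dtot N eps gam (In x i) * phat N eps gam t (Abs b j))"
    unfolding habs.simps by (intro tendsto_intros habs_tendsto_phat[OF assms])
qed

section \<open>The generator of the dual chain\<close>

text \<open>The generator of the dual chain applied to a function extended by \<open>0\<close> to the absorbing
  states.\<close>
definition dual_gen :: "nat \<Rightarrow> real \<Rightarrow> real \<Rightarrow> (nat \<times> nat \<Rightarrow> real) \<Rightarrow> nat \<Rightarrow> nat \<Rightarrow> real" where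
  "dual_gen N eps gam v x i =
     eps ^ i * (if x < N then v (x + 1, i) - v (x, i) else 0)
   + eps ^ i * (if 2 \<le> x then v (x - 1, i) - v (x, i) else 0)
   + gam * (v (x, 1 - i) - v (x, i))
   - (if x = 1 then v (x, i) else 0) - (if x = N then v (x, i) else 0)"

definition res_inflow :: "nat \<Rightarrow> (side \<Rightarrow> nat \<Rightarrow> real) \<Rightarrow> nat \<Rightarrow> nat \<Rightarrow> real" where
  "res_inflow N \<rho> x i = (if x = 1 then \<rho> L i else 0) + (if x = N then \<rho> R i else 0)"

definition absorption_mean :: "nat \<Rightarrow> real \<Rightarrow> real \<Rightarrow> (side \<Rightarrow> nat \<Rightarrow> real) \<Rightarrow> dstate \<Rightarrow> real" where
  "absorption_mean N eps gam \<rho> s = (\<Sum>\<beta>\<in>{L, R}. \<Sum>j\<in>{0, 1}. phat N eps gam s (Abs \<beta> j) * \<rho> \<beta> j)"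

lemma absorption_mean_Abs: "j \<in> {0, 1} \<Longrightarrow> absorption_mean N eps gam \<rho> (Abs b j) = \<rho> b j"
  by (cases b) (auto simp: absorption_mean_def phat_Abs)

lemma absorption_mean_In:
  assumes "0 \<le> eps" "0 < gam"
  shows "absorption_mean N eps gam \<rho> (In x i) = (\<Sum>t\<in>dtargets x i.
    drate N eps gam (In x i) t / dtot N eps gam (In x i) * absorption_mean N eps gam \<rho> t)"
  unfolding absorption_mean_def phat_In[OF assms]
  by (simp add: sum_distrib_left sum_distrib_right mult.assoc sum.distrib distrib_left add_divide_distrib)

lemma dual_gen_absorption_mean:
  assumes "0 \<le> eps" "0 < gam" "i \<in> {0, 1}"
  shows "dual_gen N eps gam (\<lambda>(y, k). absorption_mean N eps gam \<rho> (In y k)) x i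
    + res_inflow N \<rho> x i = 0"
proof -
  let ?h = "absorption_mean N eps gam \<rho>"
  define a where "a = (if x < N then eps ^ i else 0)"
  define b where "b = (if 2 \<le> x then eps ^ i else 0)"
  define c where "c = (if x = 1 then 1 else (0::real))"
  define d where "d = (if x = N then 1 else (0::real))"
  have "(a + b + gam + c + d) * ?h (In x i)
      = a * ?h (In (x + 1) i) + b * ?h (In (x - 1) i) + gam * ?h (In x (1 - i)) + c * \<rho> L i + d * \<rho> R i"
  proof -
    have "dtot N eps gam (In x i) * ?h (In x i) = (\<Sum>t\<in>dtargets x i. drate N eps gam (In x i) t * ?h t)"
      using dtot_pos[OF assms(1,2), of N x i]
      by (simp add: absorption_mean_In[OF assms(1,2)] sum_distrib_left)
    then show ?thesis
      unfolding dtot_In sum_dtargets[OF assms(3)] drate_In[OF assms(3)] absorption_mean_Abs[OF assms(3)]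
      by (simp add: a_def b_def c_def d_def)
  qed
  moreover have "dual_gen N eps gam (\<lambda>(y, k). ?h (In y k)) x i + res_inflow N \<rho> x i
      = a * (?h (In (x + 1) i) - ?h (In x i)) + b * (?h (In (x - 1) i) - ?h (In x i))
        + gam * (?h (In x (1 - i)) - ?h (In x i)) - c * ?h (In x i) - d * ?h (In x i)
        + c * \<rho> L i + d * \<rho> R i"
    by (simp add: dual_gen_def res_inflow_def a_def b_def c_def d_def)
  ultimately show ?thesis by (simp add: algebra_simps)
qed

lemma dual_gen_uminus: "dual_gen N eps gam (\<lambda>p. - u p) x i = - dual_gen N eps gam u x i"
  by (simp add: dual_gen_def algebra_simps)

lemma dual_gen_diff:
  "dual_gen N eps gam (\<lambda>p. u p - w p) x i = dual_gen N eps gam u x i - dual_gen N eps gam w x i"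
  by (simp add: dual_gen_def algebra_simps)

lemma dual_gen_max_principle:
  assumes N: "1 \<le> N" and eps: "0 \<le> eps" and gam: "0 < gam"
    and harmonic: "\<And>x i. x \<in> {1..N} \<Longrightarrow> i \<in> {0, 1} \<Longrightarrow> dual_gen N eps gam u x i = 0"
    and "x \<in> {1..N}" "i \<in> {0, 1}"
  shows "u (x, i) \<le> 0"
proof -
  define K where "K = {1..N} \<times> {0, 1::nat}"
  define m where "m = Max (u ` K)"
  have "finite K" "K \<noteq> {}" using N by (auto simp: K_def)
  then have le_m: "u k \<le> m" if "k \<in> K" for k
    using that by (auto simp: m_def)
  have "m \<in> u ` K"
    unfolding m_def using \<open>finite K\<close> \<open>K \<noteq> {}\<close> by (intro Max_in) auto
  then obtain x0 i0 where x0: "x0 \<in> {1..N}" "i0 \<in> {0, 1}" "u (x0, i0) = m"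
    unfolding K_def by blast
  have "m \<le> 0"
  proof (rule ccontr)
    assume m_pos: "\<not> m \<le> 0"
    txt \<open>At a positive maximum all five terms of the generator are \<open>\<le> 0\<close>, hence all vanish:
      the maximum spreads to the other layer and leftwards in layer \<open>0\<close>, but it cannot sit at
      site \<open>1\<close>, where the dual chain is killed.\<close>
    have spread: "x \<noteq> 1 \<and> u (x, 1 - i) = m \<and> (i = 0 \<and> 2 \<le> x \<longrightarrow> u (x - 1, 0) = m)"
      if xi: "x \<in> {1..N}" "i \<in> {0, 1}" "u (x, i) = m" for x i
    proof -
      define t1 where "t1 = eps ^ i * (if x < N then u (x + 1, i) - u (x, i) else 0)"
      define t2 where "t2 = eps ^ i * (if 2 \<le> x then u (x - 1, i) - u (x, i) else 0)"
      define t3 where "t3 = gam * (u (x, 1 - i) - u (x, i))"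
      define t4 where "t4 = (if x = 1 then u (x, i) else 0)"
      define t5 where "t5 = (if x = N then u (x, i) else 0)"
      have "t1 + t2 + t3 - t4 - t5 = 0"
        using harmonic[OF xi(1,2)] by (simp add: dual_gen_def t1_def t2_def t3_def t4_def t5_def)
      moreover have "t1 \<le> 0"
        unfolding t1_def using xi le_m[of "(x + 1, i)"] eps
        by (auto simp: K_def intro!: mult_nonneg_nonpos)
      moreover have "t2 \<le> 0"
      proof -
        have "2 \<le> x \<Longrightarrow> u (x - 1, i) \<le> m"
          using xi by (intro le_m) (auto simp: K_def)
        then show ?thesis
          unfolding t2_def using xi eps by (auto intro!: mult_nonneg_nonpos)
      qed
      moreover have "t3 \<le> 0"
        unfolding t3_def using xi le_m[of "(x, 1 - i)"] gam
        by (auto simp: K_def intro!: mult_nonneg_nonpos)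
      moreover have "0 \<le> t4" "0 \<le> t5"
        unfolding t4_def t5_def using xi m_pos by auto
      ultimately have "t2 = 0" "t3 = 0" "t4 = 0" by linarith+
      then show ?thesis
        using xi m_pos gam unfolding t2_def t3_def t4_def by (auto split: if_splits)
    qed
    have "u (x, 0) \<noteq> m" if "x \<in> {1..N}" for x
      using that
    proof (induction x)
      case (Suc y)
      then show ?case using spread[OF Suc.prems, of 0] by fastforce
    qed simp
    moreover have "u (x0, 0) = m"
      using x0 spread[OF x0] by auto
    ultimately show False using x0(1) by blast
  qed
  moreover have "u (x, i) \<le> m"
    using assms(5,6) by (intro le_m) (auto simp: K_def)
  ultimately show ?thesis by linarith
qed

lemma dual_gen_harmonic_eq_0:
  assumes N: "1 \<le> N" and eps: "0 \<le> eps" and gam: "0 < gam"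
    and harmonic: "\<And>x i. x \<in> {1..N} \<Longrightarrow> i \<in> {0, 1} \<Longrightarrow> dual_gen N eps gam u x i = 0"
    and x: "x \<in> {1..N}" "i \<in> {0, 1}"
  shows "u (x, i) = 0"
proof -
  have "u (x, i) \<le> 0"
    by (rule dual_gen_max_principle[OF N eps gam harmonic x])
  moreover have "- u (x, i) \<le> 0"
    using dual_gen_max_principle[OF N eps gam _ x, of "\<lambda>p. - u p"] harmonic
    by (simp add: dual_gen_uminus)
  ultimately show ?thesis by simp
qed

lemma sum_by_parts:
  fixes a c :: "nat \<Rightarrow> real"
  shows "(\<Sum>x\<in>{1..<N}. c x * (a x - a (x + 1)))
    = (\<Sum>x\<in>{1..N}. a x * ((if x < N then c x else 0) - (if 2 \<le> x then c (x - 1) else 0)))"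
proof -
  have right: "(\<Sum>x\<in>{1..N}. a x * (if x < N then c x else 0)) = (\<Sum>x\<in>{1..<N}. c x * a x)"
    by (intro sum.mono_neutral_cong_right) auto
  have "(\<Sum>x\<in>{1..N}. a x * (if 2 \<le> x then c (x - 1) else 0)) = (\<Sum>x\<in>{2..N}. a x * c (x - 1))"
    by (intro sum.mono_neutral_cong_right) auto
  also have "\<dots> = (\<Sum>x\<in>{1..<N}. c x * a (x + 1))"
    by (rule sum.reindex_bij_witness[where i = Suc and j = "\<lambda>x. x - 1"]) auto
  finally have left: "(\<Sum>x\<in>{1..N}. a x * (if 2 \<le> x then c (x - 1) else 0))
      = (\<Sum>x\<in>{1..<N}. c x * a (x + 1))" .
  show ?thesis
    by (simp only: right_diff_distrib sum_subtractf right left)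
qed

lemma sum_if_eq_mult:
  fixes f g :: "nat \<Rightarrow> real"
  assumes "a \<in> A" "finite A"
  shows "(\<Sum>x\<in>A. f x * (if x = a then g x else 0)) = f a * g a"
proof -
  have "(\<Sum>x\<in>A. f x * (if x = a then g x else 0)) = (\<Sum>x\<in>A. if x = a then f x * g x else 0)"
    by (rule sum.cong) auto
  then show ?thesis using assms by simp
qed

definition dual_form :: "nat \<Rightarrow> real \<Rightarrow> real \<Rightarrow> (nat \<times> nat \<Rightarrow> real) \<Rightarrow> (nat \<times> nat \<Rightarrow> real) \<Rightarrow> real" where
  "dual_form N eps gam v u =
     (\<Sum>x\<in>{1..<N}. (v (x + 1, 0) - v (x, 0)) * (u (x, 0) - u (x + 1, 0))
        + eps * ((v (x + 1, 1) - v (x, 1)) * (u (x, 1) - u (x + 1, 1))))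
   + (\<Sum>x\<in>{1..N}. gam * ((v (x, 1) - v (x, 0)) * (u (x, 0) - u (x, 1))))
   - (v (1, 0) * u (1, 0) + v (1, 1) * u (1, 1) + v (N, 0) * u (N, 0) + v (N, 1) * u (N, 1))"

lemma dual_form_sym: "dual_form N eps gam v u = dual_form N eps gam u v"
  unfolding dual_form_def by (simp add: algebra_simps)

lemma sum_hops_by_parts:
  fixes v u :: "nat \<times> nat \<Rightarrow> real"
  shows "(\<Sum>x\<in>{1..<N}. (v (x + 1, i) - v (x, i)) * (u (x, i) - u (x + 1, i)))
   = (\<Sum>x\<in>{1..N}. u (x, i) * ((if x < N then v (x + 1, i) - v (x, i) else 0)
                               + (if 2 \<le> x then v (x - 1, i) - v (x, i) else 0)))"
  unfolding sum_by_parts[of "\<lambda>x. v (x + 1, i) - v (x, i)" "\<lambda>x. u (x, i)" N]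
  by (rule sum.cong) auto

lemma dual_form_eq_sum_dual_gen:
  fixes v u :: "nat \<times> nat \<Rightarrow> real"
  assumes N: "1 \<le> N"
  shows "dual_form N eps gam v u
    = (\<Sum>x\<in>{1..N}. u (x, 0) * dual_gen N eps gam v x 0 + u (x, 1) * dual_gen N eps gam v x 1)"
proof -
  let ?lap = "\<lambda>i x. (if x < N then v (x + 1, i) - v (x, i) else 0)
                   + (if 2 \<le> x then v (x - 1, i) - v (x, i) else 0)"
  let ?kill = "\<lambda>i x. (if x = 1 then v (x, i) else 0) + (if x = N then v (x, i) else 0)"
  have kill: "(\<Sum>x\<in>{1..N}. u (x, 0) * ?kill 0 x) + (\<Sum>x\<in>{1..N}. u (x, 1) * ?kill 1 x)
      = v (1, 0) * u (1, 0) + v (1, 1) * u (1, 1) + v (N, 0) * u (N, 0) + v (N, 1) * u (N, 1)"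
    using N by (simp add: sum.distrib sum_if_eq_mult algebra_simps)
  have "(\<Sum>x\<in>{1..N}. u (x, 0) * dual_gen N eps gam v x 0 + u (x, 1) * dual_gen N eps gam v x 1)
      = (\<Sum>x\<in>{1..N}. u (x, 0) * ?lap 0 x + eps * (u (x, 1) * ?lap 1 x)
          + gam * ((v (x, 1) - v (x, 0)) * (u (x, 0) - u (x, 1)))
          - (u (x, 0) * ?kill 0 x + u (x, 1) * ?kill 1 x))"
    by (rule sum.cong) (auto simp: dual_gen_def algebra_simps)
  also have "\<dots> = dual_form N eps gam v u"
    unfolding sum.distrib sum_subtractf sum_distrib_left[symmetric] kill dual_form_def
      sum_hops_by_parts ..
  finally show ?thesis ..
qed

lemma dual_gen_self_adjoint:
  assumes "1 \<le> N"
  shows "(\<Sum>x\<in>{1..N}. u (x, 0) * dual_gen N eps gam v x 0 + u (x, 1) * dual_gen N eps gam v x 1)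
    = (\<Sum>x\<in>{1..N}. v (x, 0) * dual_gen N eps gam u x 0 + v (x, 1) * dual_gen N eps gam u x 1)"
  using dual_form_sym[of N eps gam v u] by (simp add: dual_form_eq_sum_dual_gen[OF assms])

section \<open>The particle system and its generator\<close>

lemma sum_list_concat: "sum_list (concat xss) = sum_list (map sum_list xss)"
  for xss :: "'a::monoid_add list list"
  by (induction xss) auto

lemma sum_qrate_list_mult:
  fixes h :: "'a \<Rightarrow> real"
  assumes "finite F"
  shows "(\<Sum>\<zeta>\<in>F. (if \<zeta> = \<eta> then 0 else sum_list (map fst (filter (\<lambda>rt. snd rt = \<zeta>) xs))) * h \<zeta>)
     = sum_list (map (\<lambda>(r, \<zeta>). if \<zeta> \<in> F \<and> \<zeta> \<noteq> \<eta> then r * h \<zeta> else 0) xs)"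
proof (induction xs)
  case (Cons e xs)
  obtain r0 \<zeta>0 where e: "e = (r0, \<zeta>0)" by (cases e)
  have "(\<Sum>\<zeta>\<in>F. (if \<zeta> = \<eta> then 0 else sum_list (map fst (filter (\<lambda>rt. snd rt = \<zeta>) (e # xs)))) * h \<zeta>)
    = (\<Sum>\<zeta>\<in>F. (if \<zeta> = \<eta> then 0 else sum_list (map fst (filter (\<lambda>rt. snd rt = \<zeta>) xs))) * h \<zeta>
         + (if \<zeta> = \<zeta>0 then (if \<zeta>0 = \<eta> then 0 else r0 * h \<zeta>0) else 0))"
    by (rule sum.cong) (auto simp: e algebra_simps)
  also have "\<dots> = (\<Sum>\<zeta>\<in>F. (if \<zeta> = \<eta> then 0 else sum_list (map fst (filter (\<lambda>rt. snd rt = \<zeta>) xs))) * h \<zeta>)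
         + (if \<zeta>0 \<in> F then (if \<zeta>0 = \<eta> then 0 else r0 * h \<zeta>0) else 0)"
    using assms by (simp add: sum.distrib)
  finally show ?case using Cons.IH by (simp add: e)
qed (simp add: sum.neutral)

lemma eventually_less_real_sequentially: "\<forall>\<^sub>F m in sequentially. c < real m"
  using filterlim_real_sequentially by (simp add: filterlim_at_top_dense)

locale switching_system =
  fixes \<sigma> :: int and N :: nat and eps gam :: real and \<rho> :: "side \<Rightarrow> nat \<Rightarrow> real"
    and \<mu> :: "config pmf"
  assumes sigma: "\<sigma> \<in> {-1, 0, 1}"
    and N: "1 \<le> N"
    and eps: "0 \<le> eps" "eps \<le> 1"
    and gam: "0 < gam"
    and rho_nonneg: "\<And>b j. j \<in> {0, 1} \<Longrightarrow> 0 \<le> \<rho> b j"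
    and rho_excl: "\<sigma> = -1 \<Longrightarrow> (\<And>b j. j \<in> {0, 1} \<Longrightarrow> \<rho> b j \<le> 1)"
    and stat: "stationary \<sigma> N eps gam \<rho> \<mu>"
begin

abbreviation T where "T \<equiv> transitions \<sigma> N eps gam \<rho>"

abbreviation S where "S \<equiv> statespace \<sigma> N"

definition gen :: "(config \<Rightarrow> real) \<Rightarrow> config \<Rightarrow> real" where
  "gen f \<eta> = sum_list (map (\<lambda>(r, \<zeta>). r * (f \<zeta> - f \<eta>)) (T \<eta>))"

definition lin_obs :: "(nat \<times> nat \<Rightarrow> real) \<Rightarrow> config \<Rightarrow> real" where
  "lin_obs v \<eta> = (\<Sum>x\<in>{1..N}. v (x, 0) * real (\<eta> (x, 0)) + v (x, 1) * real (\<eta> (x, 1)))"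

definition inflow_pairing :: "(nat \<times> nat \<Rightarrow> real) \<Rightarrow> real" where
  "inflow_pairing v = (\<Sum>x\<in>{1..N}. v (x, 0) * res_inflow N \<rho> x 0 + v (x, 1) * res_inflow N \<rho> x 1)"

lemma inflow_pairing_eq:
  "inflow_pairing v = v (1, 0) * \<rho> L 0 + v (1, 1) * \<rho> L 1 + v (N, 0) * \<rho> R 0 + v (N, 1) * \<rho> R 1"
  using N by (simp add: inflow_pairing_def res_inflow_def distrib_left sum.distrib sum_if_eq_mult)

definition "hop_right \<eta> x i =
  (eps ^ i * real (\<eta> (x, i)) * (1 + of_int \<sigma> * real (\<eta> (x + 1, i))), movep (x, i) (x + 1, i) \<eta>)"
definition "hop_left \<eta> x i =
  (eps ^ i * real (\<eta> (x + 1, i)) * (1 + of_int \<sigma> * real (\<eta> (x, i))), movep (x + 1, i) (x, i) \<eta>)"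
definition "switch \<eta> x i =
  (gam * real (\<eta> (x, i)) * (1 + of_int \<sigma> * real (\<eta> (x, 1 - i))), movep (x, i) (x, 1 - i) \<eta>)"
definition "exit_L \<eta> i = (real (\<eta> (1, i)) * (1 + of_int \<sigma> * \<rho> L i), remp (1, i) \<eta>)"
definition "enter_L \<eta> i = (\<rho> L i * (1 + of_int \<sigma> * real (\<eta> (1, i))), addp (1, i) \<eta>)"
definition "exit_R \<eta> i = (real (\<eta> (N, i)) * (1 + of_int \<sigma> * \<rho> R i), remp (N, i) \<eta>)"
definition "enter_R \<eta> i = (\<rho> R i * (1 + of_int \<sigma> * real (\<eta> (N, i))), addp (N, i) \<eta>)"

lemmas transition_defs = hop_right_def hop_left_def switch_def exit_L_def enter_L_def exit_R_def enter_R_def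

lemma transitions_eq:
  "T \<eta> = concat (map (\<lambda>x. [hop_right \<eta> x 0, hop_left \<eta> x 0, hop_right \<eta> x 1, hop_left \<eta> x 1]) [1..<N])
    @ concat (map (\<lambda>x. [switch \<eta> x 0, switch \<eta> x 1]) [1..<N + 1])
    @ [exit_L \<eta> 0, enter_L \<eta> 0, exit_R \<eta> 0, enter_R \<eta> 0,
       exit_L \<eta> 1, enter_L \<eta> 1, exit_R \<eta> 1, enter_R \<eta> 1]"
  unfolding transitions_def transition_defs by (simp del: upt_Suc)

lemma sum_list_transitions:
  fixes F :: "real \<times> config \<Rightarrow> 'a::comm_monoid_add"
  shows "sum_list (map F (T \<eta>)) =
    (\<Sum>x\<in>{1..<N}. F (hop_right \<eta> x 0) + F (hop_left \<eta> x 0) + F (hop_right \<eta> x 1) + F (hop_left \<eta> x 1))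
  + (\<Sum>x\<in>{1..N}. F (switch \<eta> x 0) + F (switch \<eta> x 1))
  + (F (exit_L \<eta> 0) + F (enter_L \<eta> 0) + F (exit_R \<eta> 0) + F (enter_R \<eta> 0)
     + F (exit_L \<eta> 1) + F (enter_L \<eta> 1) + F (exit_R \<eta> 1) + F (enter_R \<eta> 1))"
  unfolding transitions_eq
  by (simp add: sum_list_concat map_concat sum_set_upt_conv_sum_list_nat[symmetric] o_def
      atLeastLessThanSuc_atLeastAtMost ac_simps del: upt_Suc)

lemma transitions_cases:
  assumes "(r, \<zeta>) \<in> set (T \<eta>)"
  obtains (hop_right) x i where "x \<in> {1..<N}" "i \<in> {0, 1}" "(r, \<zeta>) = hop_right \<eta> x i"
    | (hop_left) x i where "x \<in> {1..<N}" "i \<in> {0, 1}" "(r, \<zeta>) = hop_left \<eta> x i"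
    | (switch) x i where "x \<in> {1..N}" "i \<in> {0, 1}" "(r, \<zeta>) = switch \<eta> x i"
    | (exit_L) i where "i \<in> {0, 1}" "(r, \<zeta>) = exit_L \<eta> i"
    | (enter_L) i where "i \<in> {0, 1}" "(r, \<zeta>) = enter_L \<eta> i"
    | (exit_R) i where "i \<in> {0, 1}" "(r, \<zeta>) = exit_R \<eta> i"
    | (enter_R) i where "i \<in> {0, 1}" "(r, \<zeta>) = enter_R \<eta> i"
  using assms unfolding transitions_eq
  by (simp only: set_append set_concat set_map set_upt list.set) (fastforce simp: atLeastLessThanSuc_atLeastAtMost)

lemma lin_obs_upd:
  assumes "y \<in> {1..N}" "j \<in> {0, 1}"
  shows "lin_obs v (\<eta>((y, j) := a)) = lin_obs v \<eta> + v (y, j) * (real a - real (\<eta> (y, j)))"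
proof -
  have "lin_obs v (\<eta>((y, j) := a)) = (\<Sum>x\<in>{1..N}. (v (x, 0) * real (\<eta> (x, 0)) + v (x, 1) * real (\<eta> (x, 1)))
      + (if x = y then v (y, j) * (real a - real (\<eta> (y, j))) else 0))"
    unfolding lin_obs_def by (rule sum.cong) (use assms in \<open>auto simp: algebra_simps\<close>)
  then show ?thesis using assms by (simp add: sum.distrib lin_obs_def)
qed

lemma lin_obs_addp: "y \<in> {1..N} \<Longrightarrow> j \<in> {0, 1} \<Longrightarrow> lin_obs v (addp (y, j) \<eta>) = lin_obs v \<eta> + v (y, j)"
  unfolding addp_def by (simp add: lin_obs_upd)

lemma lin_obs_remp: "y \<in> {1..N} \<Longrightarrow> j \<in> {0, 1} \<Longrightarrow>
    lin_obs v (remp (y, j) \<eta>) = (if \<eta> (y, j) = 0 then lin_obs v \<eta> else lin_obs v \<eta> - v (y, j))"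
  unfolding remp_def by (simp add: lin_obs_upd)

lemma lin_obs_movep: "y \<in> {1..N} \<Longrightarrow> j \<in> {0, 1} \<Longrightarrow> y' \<in> {1..N} \<Longrightarrow> j' \<in> {0, 1} \<Longrightarrow>
    lin_obs v (movep (y, j) (y', j') \<eta>) =
      (if \<eta> (y, j) = 0 then lin_obs v \<eta> + v (y', j') else lin_obs v \<eta> - v (y, j) + v (y', j'))"
  unfolding movep_def by (simp add: lin_obs_addp lin_obs_remp)

text \<open>A move that is blocked (\<open>\<eta>\<close> empty at the source) has rate \<open>0\<close>, and the interaction
  factors cancel between opposite hops; so linear observables are mapped to affine ones.\<close>
lemma gen_lin_obs: "gen (lin_obs v) \<eta> = dual_form N eps gam v (\<lambda>p. real (\<eta> p)) + inflow_pairing v"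
proof -
  let ?F = "\<lambda>(r, \<zeta>). r * (lin_obs v \<zeta> - lin_obs v \<eta>)"
  have hops: "?F (hop_right \<eta> x 0) + ?F (hop_left \<eta> x 0) + ?F (hop_right \<eta> x 1) + ?F (hop_left \<eta> x 1)
     = (v (x + 1, 0) - v (x, 0)) * (real (\<eta> (x, 0)) - real (\<eta> (x + 1, 0)))
        + eps * ((v (x + 1, 1) - v (x, 1)) * (real (\<eta> (x, 1)) - real (\<eta> (x + 1, 1))))"
    if "x \<in> {1..<N}" for x
    using that by (simp add: hop_right_def hop_left_def lin_obs_movep algebra_simps)
  have switches: "?F (switch \<eta> x 0) + ?F (switch \<eta> x 1)
      = gam * ((v (x, 1) - v (x, 0)) * (real (\<eta> (x, 0)) - real (\<eta> (x, 1))))"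
    if "x \<in> {1..N}" for x
    using that by (simp add: switch_def lin_obs_movep algebra_simps)
  have reservoirs: "?F (exit_L \<eta> 0) + ?F (enter_L \<eta> 0) + ?F (exit_R \<eta> 0) + ?F (enter_R \<eta> 0)
      + ?F (exit_L \<eta> 1) + ?F (enter_L \<eta> 1) + ?F (exit_R \<eta> 1) + ?F (enter_R \<eta> 1)
     = inflow_pairing v - (v (1, 0) * real (\<eta> (1, 0)) + v (1, 1) * real (\<eta> (1, 1))
         + v (N, 0) * real (\<eta> (N, 0)) + v (N, 1) * real (\<eta> (N, 1)))"
    using N by (simp add: exit_L_def enter_L_def exit_R_def enter_R_def inflow_pairing_eq
        lin_obs_remp lin_obs_addp algebra_simps)
  show ?thesis
    unfolding gen_def sum_list_transitions reservoirs dual_form_def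
    using sum.cong[OF refl hops, of "{1..<N}"] sum.cong[OF refl switches, of "{1..N}"]
    by simp
qed

lemma gen_lin_obs_eq_sum:
  "gen (lin_obs v) \<eta> = (\<Sum>x\<in>{1..N}. real (\<eta> (x, 0)) * dual_gen N eps gam v x 0
      + real (\<eta> (x, 1)) * dual_gen N eps gam v x 1) + inflow_pairing v"
  unfolding gen_lin_obs dual_form_eq_sum_dual_gen[OF N] ..

lemma statespace_le_1: "\<eta> \<in> S \<Longrightarrow> \<sigma> = -1 \<Longrightarrow> \<eta> p \<le> 1"
  by (cases p) (simp add: statespace_def)

lemma statespace_eq_0: "\<eta> \<in> S \<Longrightarrow> p \<notin> {1..N} \<times> {0, 1} \<Longrightarrow> \<eta> p = 0"
  by (cases p) (auto simp: statespace_def)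

lemma interaction_nonneg: "\<eta> \<in> S \<Longrightarrow> 0 \<le> 1 + real_of_int \<sigma> * real (\<eta> p)"
  using sigma statespace_le_1[of \<eta> p] by auto

lemma reservoir_interaction_nonneg: "j \<in> {0, 1} \<Longrightarrow> 0 \<le> 1 + real_of_int \<sigma> * \<rho> b j"
  using sigma rho_excl[of j b] rho_nonneg[of j b] by auto

lemma rate_nonneg:
  assumes "\<eta> \<in> S" "(r, \<zeta>) \<in> set (T \<eta>)"
  shows "0 \<le> r"
  using assms(2)
proof (cases rule: transitions_cases)
qed (use eps gam interaction_nonneg[OF assms(1)] reservoir_interaction_nonneg rho_nonneg
     in \<open>auto simp: transition_defs\<close>)

lemma transition_in_statespace:
  assumes "\<eta> \<in> S" "(r, \<zeta>) \<in> set (T \<eta>)" "r \<noteq> 0"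
  shows "\<zeta> \<in> S"
proof -
  have excl: "\<sigma> = -1 \<longrightarrow> \<eta> p = 0" if "1 + real_of_int \<sigma> * real (\<eta> p) \<noteq> 0" for p
    using statespace_le_1[OF assms(1), of p] that by auto
  have upd: "\<eta>'((y, j) := a) \<in> S"
    if "\<eta>' \<in> S" "y \<in> {1..N}" "j \<in> {0, 1}" "\<sigma> = -1 \<longrightarrow> a \<le> 1" for \<eta>' y j a
    using that by (auto simp: statespace_def)
  have add: "addp (y, j) \<eta> \<in> S" if "y \<in> {1..N}" "j \<in> {0, 1}" "\<sigma> = -1 \<longrightarrow> \<eta> (y, j) = 0" for y j
    unfolding addp_def using that by (intro upd[OF assms(1)]) auto
  have rem: "remp (y, j) \<eta>' \<in> S" if "\<eta>' \<in> S" "y \<in> {1..N}" "j \<in> {0, 1}" for \<eta>' y j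
    unfolding remp_def using that statespace_le_1[OF that(1)] by (intro upd) auto
  have move: "movep (y, j) (y', j') \<eta> \<in> S"
    if "y \<in> {1..N}" "j \<in> {0, 1}" "y' \<in> {1..N}" "j' \<in> {0, 1}" "(y, j) \<noteq> (y', j')"
      "\<sigma> = -1 \<longrightarrow> \<eta> (y', j') = 0" for y j y' j'
    unfolding movep_def addp_def using that
    by (intro upd[OF rem[OF assms(1)]]) (auto simp: remp_def)
  from assms(2) show ?thesis
  proof (cases rule: transitions_cases)
  qed (use assms(3) N in \<open>auto simp: transition_defs intro!: move add rem[OF assms(1)] excl\<close>)
qed

section \<open>Stationarity and truncated observables\<close>

lemma set_pmf_subset_statespace: "set_pmf \<mu> \<subseteq> S"
  using stat by (simp add: stationary_def)

lemma global_balance: "\<zeta> \<in> S \<Longrightarrow> (\<integral>\<^sup>+ \<eta>. ennreal (qrate \<sigma> N eps gam \<rho> \<eta> \<zeta>) \<partial>\<mu>)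
    = ennreal (pmf \<mu> \<zeta> * exitrate \<sigma> N eps gam \<rho> \<zeta>)"
  using stat by (simp add: stationary_def)

lemma AE_statespace: "(\<And>\<eta>. \<eta> \<in> S \<Longrightarrow> P \<eta>) \<Longrightarrow> AE \<eta> in \<mu>. P \<eta>"
  using set_pmf_subset_statespace by (auto intro!: AE_pmfI)

lemma qrate_nonneg: "\<eta> \<in> S \<Longrightarrow> 0 \<le> qrate \<sigma> N eps gam \<rho> \<eta> \<zeta>"
  unfolding qrate_def using rate_nonneg[of \<eta>] by (auto intro!: sum_list_nonneg)

lemma exitrate_nonneg: "\<eta> \<in> S \<Longrightarrow> 0 \<le> exitrate \<sigma> N eps gam \<rho> \<eta>"
  unfolding exitrate_def using rate_nonneg[of \<eta>] by (auto intro!: sum_list_nonneg)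

lemma gen_eq_qrate_exitrate:
  assumes "\<eta> \<in> S" "finite F" and h: "\<And>\<zeta>. \<zeta> \<in> S \<Longrightarrow> \<zeta> \<notin> F \<Longrightarrow> h \<zeta> = 0"
  shows "gen h \<eta> = (\<Sum>\<zeta>\<in>F. qrate \<sigma> N eps gam \<rho> \<eta> \<zeta> * h \<zeta>) - h \<eta> * exitrate \<sigma> N eps gam \<rho> \<eta>"
proof -
  have "(\<Sum>\<zeta>\<in>F. qrate \<sigma> N eps gam \<rho> \<eta> \<zeta> * h \<zeta>)
      = sum_list (map (\<lambda>(r, \<zeta>). if \<zeta> \<in> F \<and> \<zeta> \<noteq> \<eta> then r * h \<zeta> else 0) (T \<eta>))"
    unfolding qrate_def by (rule sum_qrate_list_mult[OF assms(2)])
  also have "\<dots> = sum_list (map (\<lambda>(r, \<zeta>). if \<zeta> \<noteq> \<eta> then r * h \<zeta> else 0) (T \<eta>))"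
  proof (intro arg_cong[where f = sum_list] map_cong refl)
    fix e assume e: "e \<in> set (T \<eta>)"
    obtain r \<zeta> where rz: "e = (r, \<zeta>)" by (cases e)
    have "r * h \<zeta> = 0" if "\<zeta> \<notin> F"
      using transition_in_statespace[OF assms(1)] e rz h that by (cases "r = 0") auto
    then show "(case e of (r, \<zeta>) \<Rightarrow> if \<zeta> \<in> F \<and> \<zeta> \<noteq> \<eta> then r * h \<zeta> else 0)
        = (case e of (r, \<zeta>) \<Rightarrow> if \<zeta> \<noteq> \<eta> then r * h \<zeta> else 0)"
      by (auto simp: rz)
  qed
  moreover have "h \<eta> * exitrate \<sigma> N eps gam \<rho> \<eta>
      = sum_list (map (\<lambda>(r, \<zeta>). if \<zeta> \<noteq> \<eta> then r * h \<eta> else 0) (T \<eta>))"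
    unfolding exitrate_def sum_list_map_filter' sum_list_const_mult[symmetric]
    by (intro arg_cong[where f = sum_list] map_cong) auto
  moreover have "gen h \<eta> = sum_list (map (\<lambda>(r, \<zeta>). if \<zeta> \<noteq> \<eta> then r * h \<zeta> else 0) (T \<eta>))
      - sum_list (map (\<lambda>(r, \<zeta>). if \<zeta> \<noteq> \<eta> then r * h \<eta> else 0) (T \<eta>))"
    unfolding gen_def sum_list_subtractf[symmetric]
    by (intro arg_cong[where f = sum_list] map_cong) (auto simp: algebra_simps)
  ultimately show ?thesis by simp
qed

lemma integral_gen_finite_support:
  assumes h_nonneg: "\<And>\<eta>. 0 \<le> h \<eta>" and F: "finite F" "F \<subseteq> S"
    and h: "\<And>\<eta>. \<eta> \<in> S \<Longrightarrow> \<eta> \<notin> F \<Longrightarrow> h \<eta> = 0"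
  shows "integrable \<mu> (gen h)" "(\<integral>\<eta>. gen h \<eta> \<partial>\<mu>) = 0"
proof -
  let ?q = "qrate \<sigma> N eps gam \<rho>" and ?ex = "exitrate \<sigma> N eps gam \<rho>"
  define inflow where "inflow \<eta> = (\<Sum>\<zeta>\<in>F. ?q \<eta> \<zeta> * h \<zeta>)" for \<eta>
  define outflow where "outflow \<eta> = h \<eta> * ?ex \<eta>" for \<eta>
  define c where "c = (\<Sum>\<zeta>\<in>F. h \<zeta> * (pmf \<mu> \<zeta> * ?ex \<zeta>))"
  have c_nonneg: "0 \<le> c"
    unfolding c_def using F exitrate_nonneg h_nonneg by (auto intro!: sum_nonneg)
  have inflow: "integrable \<mu> inflow \<and> (\<integral>\<eta>. inflow \<eta> \<partial>\<mu>) = c"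
  proof (rule nn_integral_eq_integrable[THEN iffD1])
    have "(\<integral>\<^sup>+ \<eta>. ennreal (inflow \<eta>) \<partial>\<mu>)
        = (\<integral>\<^sup>+ \<eta>. (\<Sum>\<zeta>\<in>F. ennreal (h \<zeta>) * ennreal (?q \<eta> \<zeta>)) \<partial>\<mu>)"
      using qrate_nonneg h_nonneg by (intro nn_integral_cong_AE AE_statespace)
        (simp add: inflow_def ennreal_mult[symmetric] mult.commute)
    also have "\<dots> = (\<Sum>\<zeta>\<in>F. ennreal (h \<zeta>) * ennreal (pmf \<mu> \<zeta> * ?ex \<zeta>))"
      using F(2) by (simp add: nn_integral_sum nn_integral_cmult global_balance subset_iff)
    also have "\<dots> = ennreal c"
      unfolding c_def using F h_nonneg exitrate_nonneg
      by (subst sum_ennreal[symmetric]) (auto simp: ennreal_mult subset_iff)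
    finally show "(\<integral>\<^sup>+ \<eta>. ennreal (inflow \<eta>) \<partial>\<mu>) = ennreal c" .
  qed (use c_nonneg qrate_nonneg h_nonneg in \<open>auto intro!: AE_statespace sum_nonneg simp: inflow_def\<close>)
  have outflow: "integrable \<mu> outflow \<and> (\<integral>\<eta>. outflow \<eta> \<partial>\<mu>) = c"
  proof (rule nn_integral_eq_integrable[THEN iffD1])
    have "(\<integral>\<^sup>+ \<eta>. ennreal (outflow \<eta>) \<partial>\<mu>) = (\<Sum>\<eta>\<in>F. ennreal (outflow \<eta>) * pmf \<mu> \<eta>)"
      using set_pmf_subset_statespace h
      by (intro nn_integral_measure_pmf_support[OF F(1)]) (auto simp: outflow_def)
    also have "\<dots> = ennreal c"
      unfolding c_def outflow_def using F h_nonneg exitrate_nonneg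
      by (subst sum_ennreal[symmetric])
        (auto simp: ennreal_mult[symmetric] subset_iff algebra_simps intro!: sum.cong)
    finally show "(\<integral>\<^sup>+ \<eta>. ennreal (outflow \<eta>) \<partial>\<mu>) = ennreal c" .
  qed (use c_nonneg exitrate_nonneg h_nonneg in \<open>auto intro!: AE_statespace simp: outflow_def\<close>)
  have ae: "AE \<eta> in \<mu>. gen h \<eta> = inflow \<eta> - outflow \<eta>"
    using gen_eq_qrate_exitrate[OF _ F(1) h] by (intro AE_statespace) (simp add: inflow_def outflow_def)
  show "integrable \<mu> (gen h)"
    using integrable_cong_AE[OF _ _ ae] inflow outflow by simp
  have "(\<integral>\<eta>. gen h \<eta> \<partial>\<mu>) = (\<integral>\<eta>. inflow \<eta> - outflow \<eta> \<partial>\<mu>)"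
    by (rule integral_cong_AE) (use ae in auto)
  then show "(\<integral>\<eta>. gen h \<eta> \<partial>\<mu>) = 0"
    using inflow outflow by simp
qed

lemma lin_obs_ge_term:
  assumes v: "\<And>y j. y \<in> {1..N} \<Longrightarrow> j \<in> {0, 1} \<Longrightarrow> 0 \<le> v (y, j)"
    and y: "y \<in> {1..N}" "j \<in> {0, 1}"
  shows "v (y, j) * real (\<eta> (y, j)) \<le> lin_obs v \<eta>"
proof -
  have "v (y, j) * real (\<eta> (y, j)) \<le> v (y, 0) * real (\<eta> (y, 0)) + v (y, 1) * real (\<eta> (y, 1))"
    using y v[of y 0] v[of y 1] by auto
  also have "\<dots> \<le> lin_obs v \<eta>"
    unfolding lin_obs_def using y v by (intro member_le_sum) (auto intro!: add_nonneg_nonneg)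
  finally show ?thesis .
qed

lemma finite_sublevel:
  assumes c: "0 < c" and v: "\<And>y j. y \<in> {1..N} \<Longrightarrow> j \<in> {0, 1} \<Longrightarrow> c \<le> v (y, j)"
  shows "finite {\<eta> \<in> S. lin_obs v \<eta> < M}"
proof -
  define K where "K = {1..N} \<times> {0, 1::nat}"
  define b where "b = nat \<lceil>M / c\<rceil>"
  have "{\<eta> \<in> S. lin_obs v \<eta> < M} \<subseteq> {f. \<forall>p. (p \<in> K \<longrightarrow> f p \<in> {0..b}) \<and> (p \<notin> K \<longrightarrow> f p = 0)}"
  proof (intro subsetI CollectI allI conjI impI)
    fix \<eta> p assume \<eta>: "\<eta> \<in> {\<eta> \<in> S. lin_obs v \<eta> < M}"
    show "\<eta> p = 0" if "p \<notin> K"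
      using \<eta> that statespace_eq_0 by (auto simp: K_def)
    assume "p \<in> K"
    then obtain y j where p: "p = (y, j)" "y \<in> {1..N}" "j \<in> {0, 1}"
      unfolding K_def by blast
    have "c * real (\<eta> p) \<le> v p * real (\<eta> p)"
      using v[OF p(2,3)] p(1) by (intro mult_right_mono) auto
    also have "\<dots> \<le> lin_obs v \<eta>"
      unfolding p(1) using c v by (intro lin_obs_ge_term p(2,3)) (meson less_imp_le order_trans)
    finally have "real (\<eta> p) < M / c"
      using \<eta> c by (simp add: field_simps)
    then show "\<eta> p \<in> {0..b}"
      unfolding b_def by simp linarith
  qed
  moreover have "finite {f. \<forall>p. (p \<in> K \<longrightarrow> f p \<in> {0..b}) \<and> (p \<notin> K \<longrightarrow> f p = (0::nat))}"
    by (rule finite_set_of_finite_funs) (auto simp: K_def)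
  ultimately show ?thesis by (rule finite_subset)
qed

lemma integrable_finite_support:
  fixes f :: "config \<Rightarrow> real"
  assumes "finite F" "\<And>\<eta>. \<eta> \<in> S \<Longrightarrow> \<eta> \<notin> F \<Longrightarrow> f \<eta> = 0"
  shows "integrable \<mu> f"
proof (rule integrableI_bounded)
  have "(\<integral>\<^sup>+ \<eta>. ennreal (norm (f \<eta>)) \<partial>\<mu>) = (\<Sum>\<eta>\<in>F. ennreal (norm (f \<eta>)) * pmf \<mu> \<eta>)"
    using assms(2) set_pmf_subset_statespace by (intro nn_integral_measure_pmf_support[OF assms(1)]) auto
  then show "(\<integral>\<^sup>+ \<eta>. ennreal (norm (f \<eta>)) \<partial>\<mu>) < \<infinity>"
    by (simp add: ennreal_mult[symmetric])
qed simp

lemma integrable_sublevel_restrict: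
  fixes f :: "config \<Rightarrow> real"
  assumes c: "0 < c" and v: "\<And>y j. y \<in> {1..N} \<Longrightarrow> j \<in> {0, 1} \<Longrightarrow> c \<le> v (y, j)"
  shows "integrable \<mu> (\<lambda>\<eta>. if lin_obs v \<eta> < M then f \<eta> else 0)"
  by (rule integrable_finite_support[OF finite_sublevel[where v = v, OF c v]]) auto

lemma gen_const_diff: "gen (\<lambda>\<eta>. a - f \<eta>) \<eta> = - gen f \<eta>"
  unfolding gen_def uminus_sum_list_map
  by (intro arg_cong[where f = sum_list] map_cong) (auto simp: algebra_simps)

lemma gen_min_le:
  assumes "\<eta> \<in> S"
  shows "gen (\<lambda>\<eta>. min (f \<eta>) M) \<eta> \<le> (if f \<eta> < M then gen f \<eta> else 0)"
proof -
  have "gen (\<lambda>\<eta>. min (f \<eta>) M) \<eta>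
      \<le> sum_list (map (\<lambda>(r, \<zeta>). if f \<eta> < M then r * (f \<zeta> - f \<eta>) else 0) (T \<eta>))"
    unfolding gen_def
  proof (rule sum_list_mono)
    fix e assume e: "e \<in> set (T \<eta>)"
    obtain r \<zeta> where rz: "e = (r, \<zeta>)" by (cases e)
    have "0 \<le> r" using rate_nonneg[OF assms] e rz by blast
    then show "(case e of (r, \<zeta>) \<Rightarrow> r * (min (f \<zeta>) M - min (f \<eta>) M))
        \<le> (case e of (r, \<zeta>) \<Rightarrow> if f \<eta> < M then r * (f \<zeta> - f \<eta>) else 0)"
      unfolding rz by (auto intro!: mult_left_mono mult_nonneg_nonpos)
  qed
  also have "\<dots> = (if f \<eta> < M then gen f \<eta> else 0)"
    unfolding gen_def by (auto simp: case_prod_unfold)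
  finally show ?thesis .
qed

lemma integral_gen_min_lin_obs:
  assumes c: "0 < c" and v: "\<And>y j. y \<in> {1..N} \<Longrightarrow> j \<in> {0, 1} \<Longrightarrow> c \<le> v (y, j)"
  shows "integrable \<mu> (gen (\<lambda>\<eta>. min (lin_obs v \<eta>) M))"
    and "(\<integral>\<eta>. gen (\<lambda>\<eta>. min (lin_obs v \<eta>) M) \<eta> \<partial>\<mu>) = 0"
proof -
  define h where "h \<eta> = max 0 (M - lin_obs v \<eta>)" for \<eta>
  have gen_min: "gen (\<lambda>\<eta>. min (lin_obs v \<eta>) M) = (\<lambda>\<eta>. - gen h \<eta>)"
  proof
    fix \<eta>
    have "(\<lambda>\<eta>. min (lin_obs v \<eta>) M) = (\<lambda>\<eta>. M - h \<eta>)"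
      unfolding h_def by (auto simp: fun_eq_iff)
    then show "gen (\<lambda>\<eta>. min (lin_obs v \<eta>) M) \<eta> = - gen h \<eta>"
      by (simp add: gen_const_diff)
  qed
  have "finite {\<eta> \<in> S. lin_obs v \<eta> < M}"
    by (rule finite_sublevel[where v = v, OF c v])
  moreover have "0 \<le> h \<eta>" "\<eta> \<in> S \<Longrightarrow> \<eta> \<notin> {\<eta> \<in> S. lin_obs v \<eta> < M} \<Longrightarrow> h \<eta> = 0" for \<eta>
    by (auto simp: h_def)
  ultimately have "integrable \<mu> (gen h)" "(\<integral>\<eta>. gen h \<eta> \<partial>\<mu>) = 0"
    using integral_gen_finite_support[where h = h] by blast+
  then show "integrable \<mu> (gen (\<lambda>\<eta>. min (lin_obs v \<eta>) M))"
    and "(\<integral>\<eta>. gen (\<lambda>\<eta>. min (lin_obs v \<eta>) M) \<eta> \<partial>\<mu>) = 0"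
    unfolding gen_min by simp_all
qed

text \<open>By concavity of \<open>min\<close>, the generator of the truncation \<open>min (lin_obs v) M\<close> is dominated
  by that of \<open>lin_obs v\<close> below level \<open>M\<close>.\<close>
lemma integral_gen_lin_obs_sublevel_nonneg:
  assumes c: "0 < c" and v: "\<And>y j. y \<in> {1..N} \<Longrightarrow> j \<in> {0, 1} \<Longrightarrow> c \<le> v (y, j)"
  shows "0 \<le> (\<integral>\<eta>. (if lin_obs v \<eta> < M then gen (lin_obs v) \<eta> else 0) \<partial>\<mu>)"
proof -
  have "0 = (\<integral>\<eta>. gen (\<lambda>\<eta>. min (lin_obs v \<eta>) M) \<eta> \<partial>\<mu>)"
    using integral_gen_min_lin_obs[where v = v, OF c v] by simp
  also have "\<dots> \<le> (\<integral>\<eta>. (if lin_obs v \<eta> < M then gen (lin_obs v) \<eta> else 0) \<partial>\<mu>)"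
    using integral_gen_min_lin_obs[where v = v, OF c v] integrable_sublevel_restrict[where v = v, OF c v]
    by (intro integral_mono_AE AE_statespace gen_min_le)
  finally show ?thesis .
qed

section \<open>Finiteness of the first moments\<close>

text \<open>A Lyapunov function for the dual generator: the parabola \<open>x (N + 1 - x)\<close> has discrete
  Laplacian \<open>-2\<close> and vanishes at \<open>0\<close> and \<open>N + 1\<close>; the offset \<open>1 / gam\<close> in layer \<open>1\<close> produces a drift
  \<open>-1\<close> through the switching rate, which is needed since \<open>eps\<close> may vanish.\<close>
definition lyap :: "nat \<times> nat \<Rightarrow> real" where
  "lyap p = real (fst p) * (real N + 1 - real (fst p)) + (if snd p = 1 then 1 / gam else 0)"

lemma dual_gen_lyap:
  "dual_gen N eps gam lyap x 0 = (if x < N then real N - 2 * real x else 0)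
     + (if 2 \<le> x then 2 * real x - real N - 2 else 0) + 1
     - (if x = 1 then real x * (real N + 1 - real x) else 0)
     - (if x = N then real x * (real N + 1 - real x) else 0)"
  "dual_gen N eps gam lyap x 1 = eps * (if x < N then real N - 2 * real x else 0)
     + eps * (if 2 \<le> x then 2 * real x - real N - 2 else 0) - 1
     - (if x = 1 then real x * (real N + 1 - real x) + 1 / gam else 0)
     - (if x = N then real x * (real N + 1 - real x) + 1 / gam else 0)"
  using gam by (simp_all add: dual_gen_def lyap_def algebra_simps)

lemma dual_gen_lyap_le:
  assumes x: "x \<in> {1..N}" and i: "i \<in> {0, 1}"
  shows "dual_gen N eps gam lyap x i \<le> -1"
proof -
  define ig where "ig = 1 / gam"
  have ig_pos: "0 < ig" using gam by (simp add: ig_def)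
  have eps_N: "eps * (real N - 2) \<le> real N - 2" if "2 \<le> N"
    using that eps by (intro mult_left_le_one_le) auto
  have eps_cancel: "eps * (real N - 2 * real x) + eps * (2 * real x - real N - 2) = - 2 * eps"
    by (simp add: algebra_simps)
  consider "x = 1" "N = 1" | "x = 1" "2 \<le> N" | "2 \<le> x" "x < N" | "x = N" "2 \<le> N"
    using x by force
  then have "dual_gen N eps gam lyap x 0 \<le> -1 \<and> dual_gen N eps gam lyap x 1 \<le> -1"
  proof cases
    case 1
    then show ?thesis unfolding dual_gen_lyap ig_def[symmetric] using ig_pos by simp
  next
    case 2
    then show ?thesis unfolding dual_gen_lyap ig_def[symmetric] using ig_pos eps_N by simp
  next
    case 3
    then show ?thesis unfolding dual_gen_lyap ig_def[symmetric] using ig_pos eps eps_cancel by simp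
  next
    case 4
    then show ?thesis unfolding dual_gen_lyap ig_def[symmetric] using ig_pos eps_N by simp
  qed
  then show ?thesis using i by auto
qed

lemma lyap_ge_1:
  assumes "y \<in> {1..N}" "j \<in> {0, 1}"
  shows "1 \<le> lyap (y, j)"
proof -
  have "1 * 1 \<le> real y * (real N + 1 - real y)"
    using assms by (intro mult_mono) auto
  moreover have "0 \<le> (if j = 1 then 1 / gam else 0)"
    using gam by simp
  ultimately show ?thesis unfolding lyap_def by simp
qed

definition particle_count :: "config \<Rightarrow> real" where
  "particle_count = lin_obs (\<lambda>_. 1)"

lemma particle_count_eq: "particle_count \<eta> = (\<Sum>x\<in>{1..N}. real (\<eta> (x, 0)) + real (\<eta> (x, 1)))"
  by (simp add: particle_count_def lin_obs_def)

lemma particle_count_nonneg: "0 \<le> particle_count \<eta>"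
  unfolding particle_count_eq by (auto intro!: sum_nonneg)

lemma gen_lyap_le: "gen (lin_obs lyap) \<eta> \<le> inflow_pairing lyap - particle_count \<eta>"
proof -
  have "gen (lin_obs lyap) \<eta> \<le> (\<Sum>x\<in>{1..N}. real (\<eta> (x, 0)) * (-1) + real (\<eta> (x, 1)) * (-1))
      + inflow_pairing lyap"
    unfolding gen_lin_obs_eq_sum by (intro add_mono sum_mono mult_left_mono dual_gen_lyap_le) auto
  also have "\<dots> = inflow_pairing lyap - particle_count \<eta>"
    by (simp add: particle_count_eq sum_negf[symmetric])
  finally show ?thesis .
qed

lemma inflow_pairing_lyap_nonneg: "0 \<le> inflow_pairing lyap"
  unfolding inflow_pairing_eq
  using lyap_ge_1[of 1 0] lyap_ge_1[of 1 1] lyap_ge_1[of N 0] lyap_ge_1[of N 1] N rho_nonneg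
  by (auto intro!: add_nonneg_nonneg mult_nonneg_nonneg)

lemma integrable_particle_count: "integrable \<mu> particle_count"
proof -
  define f where "f m \<eta> = (if lin_obs lyap \<eta> < real m then particle_count \<eta> else 0)" for m :: nat and \<eta>
  have f_int: "integrable \<mu> (f m)" for m
    unfolding f_def by (rule integrable_sublevel_restrict[where v = lyap, OF zero_less_one lyap_ge_1])
  have f_bound: "(\<integral>\<eta>. f m \<eta> \<partial>\<mu>) \<le> inflow_pairing lyap" for m
  proof -
    have "0 \<le> (\<integral>\<eta>. (if lin_obs lyap \<eta> < real m then gen (lin_obs lyap) \<eta> else 0) \<partial>\<mu>)"
      by (rule integral_gen_lin_obs_sublevel_nonneg[where v = lyap, OF zero_less_one lyap_ge_1])
    also have "\<dots> \<le> (\<integral>\<eta>. inflow_pairing lyap - f m \<eta> \<partial>\<mu>)"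
      using integrable_sublevel_restrict[where v = lyap, OF zero_less_one lyap_ge_1] f_int gen_lyap_le inflow_pairing_lyap_nonneg
      by (intro integral_mono) (auto simp: f_def)
    also have "\<dots> = inflow_pairing lyap - (\<integral>\<eta>. f m \<eta> \<partial>\<mu>)"
      using f_int by simp
    finally show ?thesis by simp
  qed
  have "(SUP m. ennreal (f m \<eta>)) = ennreal (particle_count \<eta>)" for \<eta>
  proof (rule antisym)
    show "(SUP m. ennreal (f m \<eta>)) \<le> ennreal (particle_count \<eta>)"
      by (rule SUP_least) (auto simp: f_def particle_count_nonneg)
    have "ennreal (particle_count \<eta>) = ennreal (f (nat \<lceil>lin_obs lyap \<eta>\<rceil> + 1) \<eta>)"
      unfolding f_def by (simp; linarith)
    also have "\<dots> \<le> (SUP m. ennreal (f m \<eta>))"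
      by (rule SUP_upper) simp
    finally show "ennreal (particle_count \<eta>) \<le> (SUP m. ennreal (f m \<eta>))" .
  qed
  then have "(\<integral>\<^sup>+ \<eta>. ennreal (particle_count \<eta>) \<partial>\<mu>) = (SUP m. \<integral>\<^sup>+ \<eta>. ennreal (f m \<eta>) \<partial>\<mu>)"
    by (subst nn_integral_monotone_convergence_SUP[symmetric])
      (auto intro!: incseq_SucI le_funI simp: f_def particle_count_nonneg)
  also have "\<dots> \<le> ennreal (inflow_pairing lyap)"
  proof (rule SUP_least)
    fix m
    have "(\<integral>\<^sup>+ \<eta>. ennreal (f m \<eta>) \<partial>\<mu>) = ennreal (\<integral>\<eta>. f m \<eta> \<partial>\<mu>)"
      using f_int by (rule nn_integral_eq_integral) (simp add: f_def particle_count_nonneg)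
    then show "(\<integral>\<^sup>+ \<eta>. ennreal (f m \<eta>) \<partial>\<mu>) \<le> ennreal (inflow_pairing lyap)"
      using f_bound by (simp add: ennreal_leI)
  qed
  also have "\<dots> < \<infinity>"
    by simp
  finally show ?thesis
    by (intro integrableI_nonneg) (auto simp: particle_count_nonneg)
qed

lemma integrable_occupation:
  assumes "x \<in> {1..N}" "i \<in> {0, 1}"
  shows "integrable \<mu> (\<lambda>\<eta>. real (\<eta> (x, i)))"
proof (rule Bochner_Integration.integrable_bound[OF integrable_particle_count])
  have "1 * real (\<eta> (x, i)) \<le> lin_obs (\<lambda>_. 1) \<eta>" for \<eta>
    by (rule lin_obs_ge_term[OF _ assms]) simp
  then show "AE \<eta> in \<mu>. norm (real (\<eta> (x, i))) \<le> norm (particle_count \<eta>)"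
    using particle_count_nonneg by (auto simp: particle_count_def)
qed simp

section \<open>The stationary profile\<close>

definition density :: "nat \<times> nat \<Rightarrow> real" where
  "density p = (\<integral>\<eta>. real (\<eta> p) \<partial>\<mu>)"

definition balance_defect :: "nat \<Rightarrow> nat \<Rightarrow> real" where
  "balance_defect x i = dual_gen N eps gam density x i + res_inflow N \<rho> x i"

definition defect_pairing :: "(nat \<times> nat \<Rightarrow> real) \<Rightarrow> real" where
  "defect_pairing v = (\<Sum>x\<in>{1..N}. v (x, 0) * balance_defect x 0 + v (x, 1) * balance_defect x 1)"

lemma integrable_gen_lin_obs: "integrable \<mu> (gen (lin_obs v))"
  unfolding gen_lin_obs_eq_sum
  by (intro Bochner_Integration.integrable_add Bochner_Integration.integrable_sum
      integrable_mult_left integrable_occupation measure_pmf.integrable_const) auto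

lemma integral_gen_lin_obs: "(\<integral>\<eta>. gen (lin_obs v) \<eta> \<partial>\<mu>) = defect_pairing v"
proof -
  have "(\<integral>\<eta>. gen (lin_obs v) \<eta> \<partial>\<mu>) = (\<Sum>x\<in>{1..N}. density (x, 0) * dual_gen N eps gam v x 0
      + density (x, 1) * dual_gen N eps gam v x 1) + inflow_pairing v"
    unfolding gen_lin_obs_eq_sum density_def
    by (subst Bochner_Integration.integral_add Bochner_Integration.integral_sum;
        auto intro!: Bochner_Integration.integrable_add Bochner_Integration.integrable_sum
          integrable_mult_left integrable_occupation sum.cong)+
  also have "\<dots> = defect_pairing v"
    unfolding dual_gen_self_adjoint[OF N] inflow_pairing_def defect_pairing_def
      balance_defect_def sum.distrib[symmetric]
    by (rule sum.cong) (auto simp: algebra_simps)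
  finally show ?thesis .
qed

lemma defect_pairing_nonneg:
  assumes c: "0 < c" and v: "\<And>y j. y \<in> {1..N} \<Longrightarrow> j \<in> {0, 1} \<Longrightarrow> c \<le> v (y, j)"
  shows "0 \<le> defect_pairing v"
proof -
  define s where "s m \<eta> = (if lin_obs v \<eta> < real m then gen (lin_obs v) \<eta> else 0)"
    for m :: nat and \<eta>
  have "(\<lambda>m. \<integral>\<eta>. s m \<eta> \<partial>\<mu>) \<longlonglongrightarrow> (\<integral>\<eta>. gen (lin_obs v) \<eta> \<partial>\<mu>)"
  proof (rule integral_dominated_convergence[where w = "\<lambda>\<eta>. \<bar>gen (lin_obs v) \<eta>\<bar>"])
    show "AE \<eta> in \<mu>. (\<lambda>m. s m \<eta>) \<longlonglongrightarrow> gen (lin_obs v) \<eta>"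
    proof (intro AE_pmfI tendsto_eventually)
      fix \<eta>
      show "\<forall>\<^sub>F m in sequentially. s m \<eta> = gen (lin_obs v) \<eta>"
        using eventually_less_real_sequentially[of "lin_obs v \<eta>"]
        by (rule eventually_mono) (simp add: s_def)
    qed
  qed (use integrable_gen_lin_obs in \<open>auto simp: s_def\<close>)
  moreover have "0 \<le> (\<integral>\<eta>. s m \<eta> \<partial>\<mu>)" for m
    unfolding s_def by (rule integral_gen_lin_obs_sublevel_nonneg[where v = v, OF c v])
  ultimately have "0 \<le> (\<integral>\<eta>. gen (lin_obs v) \<eta> \<partial>\<mu>)"
    by (intro LIMSEQ_le_const) auto
  then show ?thesis
    by (simp add: integral_gen_lin_obs)
qed

lemma particle_count_transition_le:
  assumes "(r, \<zeta>) \<in> set (T \<eta>)"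
  shows "particle_count \<zeta> \<le> particle_count \<eta> + 1"
  using assms
proof (cases rule: transitions_cases)
qed (use N in \<open>auto simp: transition_defs particle_count_def lin_obs_movep lin_obs_remp lin_obs_addp\<close>)

definition reservoir_rates :: "config \<Rightarrow> real" where
  "reservoir_rates \<eta> = (\<Sum>i\<in>{0, 1}.
     real (\<eta> (1, i)) * (1 + of_int \<sigma> * \<rho> L i) + \<rho> L i * (1 + of_int \<sigma> * real (\<eta> (1, i)))
   + real (\<eta> (N, i)) * (1 + of_int \<sigma> * \<rho> R i) + \<rho> R i * (1 + of_int \<sigma> * real (\<eta> (N, i))))"

lemma sum_rates_count_jump:
  "sum_list (map (\<lambda>(r, \<zeta>). r * \<bar>particle_count \<zeta> - particle_count \<eta>\<bar>) (T \<eta>)) = reservoir_rates \<eta>"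
proof -
  let ?F = "\<lambda>(r, \<zeta>). r * \<bar>particle_count \<zeta> - particle_count \<eta>\<bar>"
  have hops: "?F (hop_right \<eta> x 0) + ?F (hop_left \<eta> x 0) + ?F (hop_right \<eta> x 1) + ?F (hop_left \<eta> x 1) = 0"
    if "x \<in> {1..<N}" for x
    using that by (simp add: hop_right_def hop_left_def particle_count_def lin_obs_movep)
  have switches: "?F (switch \<eta> x 0) + ?F (switch \<eta> x 1) = 0" if "x \<in> {1..N}" for x
    using that by (simp add: switch_def particle_count_def lin_obs_movep)
  have reservoirs: "?F (exit_L \<eta> 0) + ?F (enter_L \<eta> 0) + ?F (exit_R \<eta> 0) + ?F (enter_R \<eta> 0)
      + ?F (exit_L \<eta> 1) + ?F (enter_L \<eta> 1) + ?F (exit_R \<eta> 1) + ?F (enter_R \<eta> 1) = reservoir_rates \<eta>"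
    using N by (simp add: exit_L_def enter_L_def exit_R_def enter_R_def reservoir_rates_def
        particle_count_def lin_obs_remp lin_obs_addp algebra_simps)
  show ?thesis
    unfolding sum_list_transitions reservoirs
    using sum.cong[OF refl hops, of "{1..<N}"] sum.cong[OF refl switches, of "{1..N}"] by simp
qed

lemma abs_gen_min_count_le:
  assumes "\<eta> \<in> S"
  shows "\<bar>gen (\<lambda>\<eta>. min (particle_count \<eta>) M) \<eta>\<bar> \<le> reservoir_rates \<eta>"
proof -
  have "\<bar>gen (\<lambda>\<eta>. min (particle_count \<eta>) M) \<eta>\<bar>
      \<le> sum_list (map abs (map (\<lambda>(r, \<zeta>). r * (min (particle_count \<zeta>) M - min (particle_count \<eta>) M)) (T \<eta>)))"
    unfolding gen_def by (rule sum_list_abs)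
  also have "\<dots> \<le> sum_list (map (\<lambda>(r, \<zeta>). r * \<bar>particle_count \<zeta> - particle_count \<eta>\<bar>) (T \<eta>))"
    unfolding map_map
  proof (rule sum_list_mono)
    fix e assume e: "e \<in> set (T \<eta>)"
    obtain r \<zeta> where rz: "e = (r, \<zeta>)" by (cases e)
    have "0 \<le> r" using rate_nonneg[OF assms] e rz by blast
    then show "(abs \<circ> (\<lambda>(r, \<zeta>). r * (min (particle_count \<zeta>) M - min (particle_count \<eta>) M))) e
        \<le> (\<lambda>(r, \<zeta>). r * \<bar>particle_count \<zeta> - particle_count \<eta>\<bar>) e"
      unfolding rz by (auto simp: abs_mult min_def intro!: mult_left_mono)
  qed
  finally show ?thesis
    unfolding sum_rates_count_jump .
qed

lemma integrable_reservoir_rates: "integrable \<mu> reservoir_rates"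
  unfolding reservoir_rates_def using N
  by (intro Bochner_Integration.integrable_sum Bochner_Integration.integrable_add
      integrable_mult_left integrable_mult_right integrable_occupation) auto

text \<open>Only reservoir moves change the particle number, each by one, so the generators of the
  truncations \<open>min particle_count m\<close> are dominated by the integrable reservoir rates.\<close>
lemma defect_pairing_one: "defect_pairing (\<lambda>_. 1) = 0"
proof -
  define s where "s m = gen (\<lambda>\<eta>. min (particle_count \<eta>) (real m))" for m :: nat
  have "(\<lambda>m. \<integral>\<eta>. s m \<eta> \<partial>\<mu>) \<longlonglongrightarrow> (\<integral>\<eta>. gen particle_count \<eta> \<partial>\<mu>)"
  proof (rule integral_dominated_convergence[where w = reservoir_rates])
    show "AE \<eta> in \<mu>. (\<lambda>m. s m \<eta>) \<longlonglongrightarrow> gen particle_count \<eta>"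
    proof (rule AE_pmfI, rule tendsto_eventually)
      fix \<eta>
      have "s m \<eta> = gen particle_count \<eta>" if "particle_count \<eta> + 1 < real m" for m
        unfolding s_def gen_def
        using that particle_count_transition_le[of _ _ \<eta>]
        by (intro arg_cong[where f = sum_list] map_cong) fastforce+
      then show "\<forall>\<^sub>F m in sequentially. s m \<eta> = gen particle_count \<eta>"
        using eventually_less_real_sequentially by (rule eventually_mono[rotated])
    qed
    show "AE \<eta> in \<mu>. norm (s m \<eta>) \<le> reservoir_rates \<eta>" for m
      unfolding s_def by (intro AE_statespace) (simp add: abs_gen_min_count_le)
  qed (simp_all add: integrable_reservoir_rates)
  moreover have "(\<integral>\<eta>. s m \<eta> \<partial>\<mu>) = 0" for m
    unfolding s_def particle_count_def by (rule integral_gen_min_lin_obs[where c = 1]) simp_all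
  ultimately have "(\<integral>\<eta>. gen particle_count \<eta> \<partial>\<mu>) = 0"
    by (simp add: LIMSEQ_const_iff)
  then show ?thesis
    by (simp add: particle_count_def integral_gen_lin_obs)
qed

lemma balance_defect_nonneg:
  assumes y: "y \<in> {1..N}" and j: "j \<in> {0, 1}"
  shows "0 \<le> balance_defect y j"
proof -
  define v where "v p = 1 + (if p = (y, j) then 1 else (0::real))" for p
  have "0 \<le> defect_pairing v"
    by (rule defect_pairing_nonneg[where c = 1]) (auto simp: v_def)
  also have "defect_pairing v
      = (\<Sum>x\<in>{1..N}. (balance_defect x 0 + balance_defect x 1) + (if x = y then balance_defect y j else 0))"
    unfolding defect_pairing_def by (rule sum.cong) (use j in \<open>auto simp: v_def algebra_simps\<close>)
  also have "\<dots> = defect_pairing (\<lambda>_. 1) + balance_defect y j"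
    using y by (simp add: sum.distrib defect_pairing_def)
  finally show ?thesis
    using defect_pairing_one by simp
qed

lemma balance_defect_eq_0:
  assumes y: "y \<in> {1..N}" and j: "j \<in> {0, 1}"
  shows "balance_defect y j = 0"
proof -
  have "(\<Sum>x\<in>{1..N}. balance_defect x 0 + balance_defect x 1) = 0"
    using defect_pairing_one by (simp add: defect_pairing_def)
  then have "balance_defect y 0 + balance_defect y 1 = 0"
    using y balance_defect_nonneg by (subst (asm) sum_nonneg_eq_0_iff) (auto intro: add_nonneg_nonneg)
  then show ?thesis
    using balance_defect_nonneg[OF y, of 0] balance_defect_nonneg[OF y, of 1] j by auto
qed

lemma density_eq_absorption_mean:
  assumes x: "x \<in> {1..N}" and i: "i \<in> {0, 1}"
  shows "density (x, i) = absorption_mean N eps gam \<rho> (In x i)"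
proof -
  let ?h = "\<lambda>(y, k). absorption_mean N eps gam \<rho> (In y k)"
  have "(\<lambda>p. density p - ?h p) (x, i) = 0"
  proof (rule dual_gen_harmonic_eq_0[OF N eps(1) gam _ x i])
    fix y j :: nat assume yj: "y \<in> {1..N}" "j \<in> {0, 1}"
    show "dual_gen N eps gam (\<lambda>p. density p - ?h p) y j = 0"
      using balance_defect_eq_0[OF yj] dual_gen_absorption_mean[OF eps(1) gam yj(2), of N \<rho> y]
      unfolding dual_gen_diff balance_defect_def by linarith
  qed
  then show ?thesis by simp
qed

lemma nn_integral_occupation:
  assumes "x \<in> {1..N}" "i \<in> {0, 1}"
  shows "(\<integral>\<^sup>+ \<eta>. ennreal (real (\<eta> (x, i))) \<partial>\<mu>) = ennreal (absorption_mean N eps gam \<rho> (In x i))"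
  using nn_integral_eq_integral[OF integrable_occupation[OF assms]] density_eq_absorption_mean[OF assms]
  by (simp add: density_def)

end

theorem mainTheorem3:
  fixes \<sigma> :: int and N :: nat and eps gam :: real and \<rho> :: "side \<Rightarrow> nat \<Rightarrow> real"
    and \<mu> :: "config pmf"
  assumes sigma: "\<sigma> \<in> {-1, 0, 1}"
    and N: "1 \<le> N"
    and eps: "0 \<le> eps" "eps \<le> 1"
    and gam: "0 < gam"
    and rho_nonneg: "\<And>b j. j \<in> {0, 1} \<Longrightarrow> 0 \<le> \<rho> b j"
    and rho_excl: "\<sigma> = -1 \<Longrightarrow> (\<And>b j. j \<in> {0, 1} \<Longrightarrow> \<rho> b j \<le> 1)"
    and stat: "stationary \<sigma> N eps gam \<rho> \<mu>"
    and x: "x \<in> {1..N}"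
  shows "(\<integral>\<^sup>+ \<eta>. ennreal (real (\<eta> (x, 0))) \<partial>measure_pmf \<mu>)
           = ennreal (\<Sum>\<beta>\<in>{L, R}. \<Sum>j\<in>{0, 1}. phat N eps gam (In x 0) (Abs \<beta> j) * \<rho> \<beta> j)
       \<and> (\<integral>\<^sup>+ \<eta>. ennreal (real (\<eta> (x, 1))) \<partial>measure_pmf \<mu>)
           = ennreal (\<Sum>\<beta>\<in>{L, R}. \<Sum>j\<in>{0, 1}. phat N eps gam (In x 1) (Abs \<beta> j) * \<rho> \<beta> j)"
proof -
  interpret switching_system \<sigma> N eps gam \<rho> \<mu>
    using sigma N eps gam rho_nonneg rho_excl stat by unfold_locales auto
  show ?thesis
    using nn_integral_occupation[OF x, of 0] nn_integral_occupation[OF x, of 1]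
    by (simp add: absorption_mean_def)
qed

end
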